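(* Let $G=(V,E)$ be a finite simple graph of order $n$ and let $T=n-1$. If $(s,x,y,z)$ is an optimal solution of the integer program with the constraints of the Infection Model $\mathrm{IM}(G,T)$ and objective "minimize $\sum_{v\in V}s_v+\frac{z}{2T}$", then $C=\{v\in V\colon s_v=1\}$ is a minimum zero forcing set of $G$ with $\mathrm{pt}(G)=\mathrm{pt}(G,C)=z$.
   Context: Zero forcing: under the standard color change rule a filled vertex $u$ can force a non-filled vertex $v$ if $v$ is the only non-filled neighbor of $u$; $C\subseteq V$ is a zero forcing set if, starting with $C$ filled and repeatedly forcing, all of $V$ becomes filled. $\mathrm{Z}(G)$ is the minimum size of a zero forcing set; a minimum zero forcing set has size $\mathrm{Z}(G)$. The propagation time $\mathrm{pt}(G,C)$ is the smallest $t^*$ such that, starting from $C^{[0]}=C$ and setting $C^{[t]}=C^{[t-1]}\cup\{v\notin C^{[t-1]}\colon$ some $u\in C^{[t-1]}$ has $v$ as its only neighbor outside $C^{[t-1]}\}$, one has $C^{[t^*]}=V$ ($\infty$ if $C$ is not a zero forcing set). $\mathrm{pt}(G)=\min\{\mathrm{pt}(G,C)\colon C$ a minimum zero forcing set$\}$. $N(u)$ is the neighborhood of $u$. Infection Model constraints: let $A$ be the set of arcs containing both $(u,v)$ and $(v,u)$ for each edge $\{u,v\}\in E$. Variables $s_v\in\{0,1\}$ and $x_v\in\{0,1,\dots,T\}$ for $v\in V$, $y_a\in\{0,1\}$ for $a\in A$, and $z\in\{0,1,\dots,T\}$, subject to: (i) $s_v+\sum_{a=(u,v)\in A}y_a=1$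 for all $v\in V$; (ii) $x_u-x_v+(T+1)y_a\leq T$ for all $a=(u,v)\in A$; (iii) $x_w-x_v+(T+1)y_a\leq T$ for all $a=(u,v)\in A$ and $w\in N(u)\setminus\{v\}$; (iv) $x_v-z\leq 0$ for all $v\in V$. *)

theory Defs
  imports Main "HOL-Library.Extended_Nat"
begin

definition simple_graph :: "'a set \<Rightarrow> ('a \<Rightarrow> 'a \<Rightarrow> bool) \<Rightarrow> bool" where
  "simple_graph V E \<longleftrightarrow> finite V \<and> (\<forall>u v. E u v \<longrightarrow> u \<in> V \<and> v \<in> V)
     \<and> (\<forall>u v. E u v \<longrightarrow> E v u) \<and> (\<forall>u. \<not> E u u)"

definition nbrs :: "'a set \<Rightarrow> ('a \<Rightarrow> 'a \<Rightarrow> bool) \<Rightarrow> 'a \<Rightarrow> 'a set" where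
  "nbrs V E u = {w \<in> V. E u w}"

definition zf_step :: "'a set \<Rightarrow> ('a \<Rightarrow> 'a \<Rightarrow> bool) \<Rightarrow> 'a set \<Rightarrow> 'a set" where
  "zf_step V E C = C \<union> {v \<in> V - C. \<exists>u \<in> C. nbrs V E u - C = {v}}"

definition zf_set :: "'a set \<Rightarrow> ('a \<Rightarrow> 'a \<Rightarrow> bool) \<Rightarrow> 'a set \<Rightarrow> bool" where
  "zf_set V E C \<longleftrightarrow> C \<subseteq> V \<and> (\<exists>t. (zf_step V E ^^ t) C = V)"

definition zf_number :: "'a set \<Rightarrow> ('a \<Rightarrow> 'a \<Rightarrow> bool) \<Rightarrow> nat" where
  "zf_number V E = Min {card C | C. zf_set V E C}"

definition min_zf_set :: "'a set \<Rightarrow> ('a \<Rightarrow> 'a \<Rightarrow> bool) \<Rightarrow> 'a set \<Rightarrow> bool" where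
  "min_zf_set V E C \<longleftrightarrow> zf_set V E C \<and> card C = zf_number V E"

definition pt_set :: "'a set \<Rightarrow> ('a \<Rightarrow> 'a \<Rightarrow> bool) \<Rightarrow> 'a set \<Rightarrow> enat" where
  "pt_set V E C = (if zf_set V E C then enat (LEAST t. (zf_step V E ^^ t) C = V) else \<infinity>)"

definition pt :: "'a set \<Rightarrow> ('a \<Rightarrow> 'a \<Rightarrow> bool) \<Rightarrow> enat" where
  "pt V E = (INF C \<in> {C. min_zf_set V E C}. pt_set V E C)"

definition IM_feasible :: "'a set \<Rightarrow> ('a \<Rightarrow> 'a \<Rightarrow> bool) \<Rightarrow> nat \<Rightarrow>
    ('a \<Rightarrow> nat) \<Rightarrow> ('a \<Rightarrow> nat) \<Rightarrow> ('a \<times> 'a \<Rightarrow> nat) \<Rightarrow> nat \<Rightarrow> bool" where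
  "IM_feasible V E T s x y z \<longleftrightarrow>
     (\<forall>v \<in> V. s v \<le> 1 \<and> x v \<le> T) \<and>
     (\<forall>u v. E u v \<longrightarrow> y (u, v) \<le> 1) \<and> z \<le> T \<and>
     (\<forall>v \<in> V. s v + (\<Sum>u \<in> {u \<in> V. E u v}. y (u, v)) = 1) \<and>
     (\<forall>u v. E u v \<longrightarrow> int (x u) - int (x v) + (int T + 1) * int (y (u, v)) \<le> int T) \<and>
     (\<forall>u v. E u v \<longrightarrow> (\<forall>w \<in> nbrs V E u - {v}.
         int (x w) - int (x v) + (int T + 1) * int (y (u, v)) \<le> int T)) \<and>
     (\<forall>v \<in> V. int (x v) - int z \<le> 0)"

definition IM_objective :: "'a set \<Rightarrow> nat \<Rightarrow> ('a \<Rightarrow> nat) \<Rightarrow> nat \<Rightarrow> real" where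
  "IM_objective V T s z = real (\<Sum>v \<in> V. s v) + real z / (2 * real T)"

definition IM_optimal :: "'a set \<Rightarrow> ('a \<Rightarrow> 'a \<Rightarrow> bool) \<Rightarrow> nat \<Rightarrow>
    ('a \<Rightarrow> nat) \<Rightarrow> ('a \<Rightarrow> nat) \<Rightarrow> ('a \<times> 'a \<Rightarrow> nat) \<Rightarrow> nat \<Rightarrow> bool" where
  "IM_optimal V E T s x y z \<longleftrightarrow> IM_feasible V E T s x y z \<and>
     (\<forall>s' x' y' z'. IM_feasible V E T s' x' y' z' \<longrightarrow>
        IM_objective V T s z \<le> IM_objective V T s' z')"

end

theory Submission
  imports Defs
begin

text \<open>
  In a feasible solution of the infection model, \<open>y (u, v) = 1\<close> says that \<open>u\<close> forces \<open>v\<close>,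
  and the big-M constraints then put \<open>u\<close> and all its other neighbours strictly before \<open>v\<close>
  in the order given by \<open>x\<close>. By induction on \<open>x v\<close>, every vertex \<open>v\<close> is filled by round
  \<open>x v \<le> z\<close> of the process started from \<open>C = {v. s v = 1}\<close>. Conversely, a zero forcing set
  \<open>C\<close> that fills \<open>V\<close> in \<open>p \<le> T\<close> rounds gives a feasible solution with \<open>\<Sum> s = |C|\<close>
  and \<open>z = p\<close>: let \<open>x v\<close> be the round in which \<open>v\<close> is filled and pick one forcing
  vertex for each \<open>v \<notin> C\<close>. Every propagation time is at most \<open>n - 1 = T\<close>, so
  \<open>z / (2T) \<in> [0, 1/2]\<close> and the objective compares solutions lexicographically, first by
  \<open>|C|\<close> and then by \<open>z\<close>.
\<close>

lemma zf_step_subset: "D \<subseteq> V \<Longrightarrow> zf_step V E D \<subseteq> V"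
  by (auto simp: zf_step_def)

lemma zf_step_inflationary: "D \<subseteq> zf_step V E D"
  by (auto simp: zf_step_def)

lemma zf_step_empty: "zf_step V E {} = {}"
  by (auto simp: zf_step_def)

lemma zf_step_forces:
  assumes "u \<in> D" "v \<in> nbrs V E u" "nbrs V E u - {v} \<subseteq> D"
  shows "v \<in> zf_step V E D"
proof (cases "v \<in> D")
  case False
  then have "nbrs V E u - D = {v}" using assms(2,3) by blast
  then show ?thesis using assms(1,2) False by (auto simp: zf_step_def nbrs_def)
qed (simp add: zf_step_def)

lemma zf_step_forced:
  "v \<in> zf_step V E D \<Longrightarrow> v \<notin> D \<Longrightarrow> \<exists>u\<in>D. nbrs V E u - D = {v}"
  by (auto simp: zf_step_def)

lemma zf_step_iter_subset: "C \<subseteq> V \<Longrightarrow> (zf_step V E ^^ t) C \<subseteq> V"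
  by (induction t) (auto dest: zf_step_subset)

lemma zf_step_iter_mono: "t \<le> t' \<Longrightarrow> (zf_step V E ^^ t) C \<subseteq> (zf_step V E ^^ t') C"
proof (induction t' rule: dec_induct)
  case (step n)
  then show ?case using zf_step_inflationary[of "(zf_step V E ^^ n) C" V E] by auto
qed simp

lemma zf_step_iter_fixpoint: "zf_step V E D = D \<Longrightarrow> (zf_step V E ^^ t) D = D"
  by (induction t) auto

lemma pt_set_le: "C \<subseteq> V \<Longrightarrow> (zf_step V E ^^ t) C = V \<Longrightarrow> pt_set V E C \<le> enat t"
  unfolding pt_set_def zf_set_def by (auto intro: Least_le)

lemma pt_set_eq_enat_iff:
  assumes "zf_set V E C"
  shows "pt_set V E C = enat p \<longleftrightarrow>
           (zf_step V E ^^ p) C = V \<and> (\<forall>q<p. (zf_step V E ^^ q) C \<noteq> V)"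
proof -
  let ?filled = "\<lambda>t. (zf_step V E ^^ t) C = V"
  have ex: "\<exists>t. ?filled t" using assms by (simp add: zf_set_def)
  have "(LEAST t. ?filled t) = p \<longleftrightarrow> ?filled p \<and> (\<forall>q<p. \<not> ?filled q)"
  proof
    assume "(LEAST t. ?filled t) = p"
    then show "?filled p \<and> (\<forall>q<p. \<not> ?filled q)"
      using LeastI_ex[OF ex] not_less_Least by blast
  next
    assume "?filled p \<and> (\<forall>q<p. \<not> ?filled q)"
    then show "(LEAST t. ?filled t) = p"
      by (intro Least_equality) (auto simp flip: not_less)
  qed
  then show ?thesis using assms by (simp add: pt_set_def)
qed

lemma card_add_pt_le:
  assumes "finite V" "C \<subseteq> V" "(zf_step V E ^^ p) C = V"
    and before: "\<forall>q<p. (zf_step V E ^^ q) C \<noteq> V"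
  shows "card C + p \<le> card V"
proof -
  let ?D = "\<lambda>t. (zf_step V E ^^ t) C"
  have strict: "?D q \<subset> ?D (Suc q)" if "q < p" for q
  proof -
    have "?D (Suc q) \<noteq> ?D q"
    proof
      assume "?D (Suc q) = ?D q"
      then have "(zf_step V E ^^ (p - q)) (?D q) = ?D q"
        by (simp add: zf_step_iter_fixpoint)
      moreover have "?D p = (zf_step V E ^^ (p - q)) (?D q)"
        using \<open>q < p\<close> by (metis funpow_add comp_apply le_add_diff_inverse2 less_imp_le)
      ultimately have "?D p = ?D q" by simp
      then show False using assms(3) before \<open>q < p\<close> by metis
    qed
    then show ?thesis using zf_step_inflationary[of "?D q" V E] by auto
  qed
  have "card C + q \<le> card (?D q)" if "q \<le> p" for q
    using that
  proof (induction q)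
    case (Suc q)
    have "finite (?D (Suc q))"
      using finite_subset[OF zf_step_iter_subset[OF assms(2)] assms(1)] .
    then have "card (?D q) < card (?D (Suc q))"
      using strict Suc.prems by (simp add: psubset_card_mono)
    then show ?case using Suc by simp
  qed simp
  from this[of p] show ?thesis using assms(3) by simp
qed

lemma pt_set_le_card:
  assumes "finite V" "zf_set V E C"
  shows "pt_set V E C \<le> enat (card V - 1)"
proof -
  obtain p where p: "pt_set V E C = enat p" using assms(2) by (simp add: pt_set_def)
  with assms have reach: "(zf_step V E ^^ p) C = V" "\<forall>q<p. (zf_step V E ^^ q) C \<noteq> V"
    by (simp_all add: pt_set_eq_enat_iff)
  have "C \<subseteq> V" using assms(2) by (simp add: zf_set_def)
  show ?thesis
  proof (cases "C = {}")
    case True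
    have "p = 0"
      using reach True by (metis zf_step_empty zf_step_iter_fixpoint funpow_0 gr0I)
    then show ?thesis using p by (simp add: zero_enat_def)
  next
    case False
    then have "card C \<ge> 1"
      using \<open>C \<subseteq> V\<close> assms(1) by (meson card_0_eq finite_subset less_one not_le)
    then show ?thesis
      using card_add_pt_le[OF assms(1) \<open>C \<subseteq> V\<close> reach] p by simp
  qed
qed

lemma min_zf_setI:
  assumes "finite V" "zf_set V E C" "\<And>D. zf_set V E D \<Longrightarrow> card C \<le> card D"
  shows "min_zf_set V E C"
proof -
  have "{card D | D. zf_set V E D} \<subseteq> {..card V}"
    using assms(1) by (auto simp: zf_set_def intro: card_mono)
  then have "zf_number V E = card C"
    unfolding zf_number_def using assms
    by (intro Min_eqI) (auto intro: finite_subset)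
  then show ?thesis using assms(2) by (simp add: min_zf_set_def)
qed

lemma pt_eqI:
  assumes "min_zf_set V E C" "\<And>D. min_zf_set V E D \<Longrightarrow> pt_set V E C \<le> pt_set V E D"
  shows "pt V E = pt_set V E C"
  unfolding pt_def using assms by (intro antisym INF_lower INF_greatest) auto

lemma big_M_le_iff:
  fixes a b T y :: nat
  assumes "y \<le> 1" "a \<le> T"
  shows "int a - int b + (int T + 1) * int y \<le> int T \<longleftrightarrow> (y = 1 \<longrightarrow> a < b)"
  using assms by (cases y) auto

lemma IM_feasible_iff:
  assumes edges: "\<forall>u v. E u v \<longrightarrow> u \<in> V \<and> v \<in> V"
  shows "IM_feasible V E T s x y z \<longleftrightarrow> z \<le> T
    \<and> (\<forall>v\<in>V. s v \<le> 1 \<and> x v \<le> z \<and> s v + (\<Sum>u\<in>{u\<in>V. E u v}. y (u, v)) = 1)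
    \<and> (\<forall>u v. E u v \<longrightarrow> y (u, v) \<le> 1
          \<and> (y (u, v) = 1 \<longrightarrow> (\<forall>w\<in>insert u (nbrs V E u - {v}). x w < x v)))"
    (is "_ \<longleftrightarrow> ?forcing")
proof
  assume F: "IM_feasible V E T s x y z"
  show ?forcing
  proof (intro conjI ballI allI impI)
    fix u v w assume uv: "E u v" "y (u, v) = 1" and w: "w \<in> insert u (nbrs V E u - {v})"
    have "int (x w) - int (x v) + (int T + 1) * int (y (u, v)) \<le> int T"
      using F uv(1) w by (auto simp: IM_feasible_def)
    then show "x w < x v" using uv(2) by simp
  qed (use F in \<open>auto simp: IM_feasible_def\<close>)
next
  assume F: ?forcing
  then have x_le: "x w \<le> T" if "w \<in> V" for w
    using that by fastforce
  have "int (x w) - int (x v) + (int T + 1) * int (y (u, v)) \<le> int T"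
    if "E u v" "w \<in> insert u (nbrs V E u - {v})" for u v w
  proof -
    have "w \<in> V" using that edges by (auto simp: nbrs_def)
    then show ?thesis using F that big_M_le_iff[OF _ x_le] by auto
  qed
  then show "IM_feasible V E T s x y z"
    using F unfolding IM_feasible_def by (auto simp: order_trans)
qed

lemma sum_le_one_eq_card:
  fixes f :: "'a \<Rightarrow> nat"
  assumes "finite A" "\<forall>a\<in>A. f a \<le> 1"
  shows "(\<Sum>a\<in>A. f a) = card {a\<in>A. f a = 1}"
proof -
  have "(\<Sum>a\<in>A. f a) = (\<Sum>a\<in>A. if f a = 1 then 1 else 0)"
    using assms(2) by (intro sum.cong) (auto simp: le_Suc_eq)
  also have "\<dots> = card {a\<in>A. f a = 1}"
    using assms(1) by (simp add: sum.If_cases Collect_conj_eq Int_commute Collect_mem_eq)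
  finally show ?thesis .
qed

lemma IM_feasible_filled_at_x:
  assumes edges: "\<forall>u v. E u v \<longrightarrow> u \<in> V \<and> v \<in> V"
    and F: "IM_feasible V E T s x y z" and "v \<in> V"
  shows "v \<in> (zf_step V E ^^ x v) {v \<in> V. s v = 1}"
  using \<open>v \<in> V\<close>
proof (induction "x v" arbitrary: v rule: less_induct)
  case less
  let ?C = "{v \<in> V. s v = 1}"
  have forcing: "\<forall>v\<in>V. s v \<le> 1 \<and> s v + (\<Sum>u\<in>{u\<in>V. E u v}. y (u, v)) = 1"
    "\<forall>u v. E u v \<longrightarrow> y (u, v) \<le> 1
       \<and> (y (u, v) = 1 \<longrightarrow> (\<forall>w\<in>insert u (nbrs V E u - {v}). x w < x v))"
    using F by (simp_all add: IM_feasible_iff[OF edges])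
  show ?case
  proof (cases "s v = 1")
    case True
    then show ?thesis using less.prems zf_step_iter_mono[of 0 "x v" V E ?C] by auto
  next
    case False
    with forcing(1) less.prems have "(\<Sum>u\<in>{u\<in>V. E u v}. y (u, v)) = 1"
      by (metis add_0 le_antisym less_one not_le)
    then have "(\<Sum>u\<in>{u\<in>V. E u v}. y (u, v)) \<noteq> 0" by simp
    then obtain u where u: "u \<in> {u\<in>V. E u v}" "y (u, v) \<noteq> 0"
      by (rule sum.not_neutral_contains_not_neutral)
    then have "y (u, v) = 1" using forcing(2) by (metis le_antisym less_one mem_Collect_eq not_le)
    then have earlier: "x w < x v" if "w \<in> insert u (nbrs V E u - {v})" for w
      using forcing(2) u(1) that by blast
    have "0 < x v" using earlier[of u] by simp
    then obtain k where k: "x v = Suc k" using gr0_implies_Suc by blast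
    have "w \<in> (zf_step V E ^^ k) ?C" if "w \<in> insert u (nbrs V E u - {v})" for w
    proof -
      have "w \<in> V" using that u(1) by (auto simp: nbrs_def)
      moreover have "x w \<le> k" using earlier[OF that] k by simp
      ultimately show ?thesis
        using less.hyps[OF earlier[OF that]] zf_step_iter_mono[of "x w" k V E ?C] by blast
    qed
    then have "v \<in> zf_step V E ((zf_step V E ^^ k) ?C)"
      using u(1) less.prems by (intro zf_step_forces) (auto simp: nbrs_def)
    then show ?thesis using k by simp
  qed
qed

lemma IM_feasible_filled_at_z:
  assumes "\<forall>u v. E u v \<longrightarrow> u \<in> V \<and> v \<in> V" "IM_feasible V E T s x y z"
  shows "(zf_step V E ^^ z) {v \<in> V. s v = 1} = V"
proof
  show "(zf_step V E ^^ z) {v \<in> V. s v = 1} \<subseteq> V" by (simp add: zf_step_iter_subset)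
  show "V \<subseteq> (zf_step V E ^^ z) {v \<in> V. s v = 1}"
  proof
    fix v assume "v \<in> V"
    then have "x v \<le> z" using assms by (simp add: IM_feasible_iff)
    then have "(zf_step V E ^^ x v) {v \<in> V. s v = 1} \<subseteq> (zf_step V E ^^ z) {v \<in> V. s v = 1}"
      by (rule zf_step_iter_mono)
    with IM_feasible_filled_at_x[OF assms \<open>v \<in> V\<close>]
    show "v \<in> (zf_step V E ^^ z) {v \<in> V. s v = 1}" by blast
  qed
qed

lemma IM_feasible_of_filled:
  assumes G: "simple_graph V E" and "C \<subseteq> V"
    and filled: "(zf_step V E ^^ p) C = V" and "p \<le> T"
  shows "\<exists>s x y. IM_feasible V E T s x y p \<and> (\<Sum>v\<in>V. s v) = card C"
proof -
  let ?D = "\<lambda>t. (zf_step V E ^^ t) C"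
  have fin: "finite V" and edges: "\<forall>u v. E u v \<longrightarrow> u \<in> V \<and> v \<in> V"
    using G by (simp_all add: simple_graph_def)
  define x where "x v = (LEAST t. v \<in> ?D t)" for v
  have filled_at: "v \<in> ?D (x v)" if "v \<in> V" for v
    unfolding x_def using filled that by (intro LeastI[of "\<lambda>t. v \<in> ?D t" p]) simp
  have x_le: "x w \<le> t" if "w \<in> ?D t" for w t
    unfolding x_def using that by (rule Least_le)
  have "\<exists>u. u \<in> ?D (x v - 1) \<and> nbrs V E u - ?D (x v - 1) = {v} \<and> 0 < x v"
    if "v \<in> V - C" for v
  proof -
    have "x v \<noteq> 0" using filled_at[of v] that by (cases "x v") auto
    then obtain k where k: "x v = Suc k" using not0_implies_Suc by blast
    then have "v \<notin> ?D k" using not_less_Least[of k "\<lambda>t. v \<in> ?D t"] by (simp add: x_def)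
    moreover have "v \<in> zf_step V E (?D k)" using filled_at[of v] that k by simp
    ultimately show ?thesis using zf_step_forced k by fastforce
  qed
  then obtain forcer where forcer: "\<And>v. v \<in> V - C \<Longrightarrow> forcer v \<in> ?D (x v - 1)
      \<and> nbrs V E (forcer v) - ?D (x v - 1) = {v} \<and> 0 < x v"
    by metis
  define s where "s v = (if v \<in> C then 1 else 0 :: nat)" for v
  define y where "y a = (if snd a \<notin> C \<and> fst a = forcer (snd a) then 1 else 0 :: nat)" for a
  have in_arcs: "s v + (\<Sum>u\<in>{u\<in>V. E u v}. y (u, v)) = 1" if "v \<in> V" for v
  proof (cases "v \<in> C")
    case False
    have "forcer v \<in> V" "E (forcer v) v"
      using forcer[of v] that False zf_step_iter_subset[OF \<open>C \<subseteq> V\<close>] by (auto simp: nbrs_def)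
    then have "(\<Sum>u\<in>{u\<in>V. E u v}. y (u, v)) = 1"
      using False fin by (simp add: y_def sum.delta)
    then show ?thesis using False by (simp add: s_def)
  qed (simp add: s_def y_def)
  have earlier: "x w < x v"
    if "E u v" "y (u, v) = 1" "w \<in> insert u (nbrs V E u - {v})" for u v w
  proof -
    have "v \<in> V - C" "u = forcer v" using that(1,2) edges by (auto simp: y_def split: if_splits)
    then have "w \<in> ?D (x v - 1)" "0 < x v" using forcer[of v] that(3) by auto
    then show ?thesis using x_le by fastforce
  qed
  have "IM_feasible V E T s x y p"
    unfolding IM_feasible_iff[OF edges]
    using \<open>p \<le> T\<close> in_arcs earlier filled_at x_le filled by (auto simp: s_def y_def)
  moreover have "(\<Sum>v\<in>V. s v) = card C"
    using sum_le_one_eq_card[OF fin, of s] \<open>C \<subseteq> V\<close> by (simp add: s_def Int_absorb1 Collect_conj_eq)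
  ultimately show ?thesis by blast
qed

lemma lex_le_of_add_fraction_le:
  fixes a b p q T :: nat
  assumes "p \<le> T" "q \<le> T"
    and le: "real a + real p / (2 * real T) \<le> real b + real q / (2 * real T)"
  shows "a \<le> b \<and> (a = b \<longrightarrow> p \<le> q)"
proof (cases "T = 0")
  case False
  have "real q / (2 * real T) \<le> 1 / 2"
    using assms(2) False by (simp add: field_simps)
  moreover have "0 \<le> real p / (2 * real T)" by simp
  ultimately have "a \<le> b" using le by linarith
  moreover have "p \<le> q" if "a = b"
    using le that False by (simp add: divide_right_mono_neg field_simps)
  ultimately show ?thesis by blast
qed (use assms in simp)

lemma IM_optimal_lex_minimal:
  assumes "IM_optimal V E T s x y z" "IM_feasible V E T s' x' y' z'"
  shows "(\<Sum>v\<in>V. s v) \<le> (\<Sum>v\<in>V. s' v) \<and> ((\<Sum>v\<in>V. s v) = (\<Sum>v\<in>V. s' v) \<longrightarrow> z \<le> z')"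
proof (rule lex_le_of_add_fraction_le)
  show "z \<le> T" "z' \<le> T" using assms by (simp_all add: IM_optimal_def IM_feasible_def)
  show "real (\<Sum>v\<in>V. s v) + real z / (2 * real T) \<le> real (\<Sum>v\<in>V. s' v) + real z' / (2 * real T)"
    using assms by (simp add: IM_optimal_def IM_objective_def)
qed

lemma IM_optimal_le_zf_set:
  assumes G: "simple_graph V E" and opt: "IM_optimal V E (card V - 1) s x y z"
    and "zf_set V E C"
  shows "card {v \<in> V. s v = 1} \<le> card C
    \<and> (card C = card {v \<in> V. s v = 1} \<longrightarrow> enat z \<le> pt_set V E C)"
proof -
  have fin: "finite V" using G by (simp add: simple_graph_def)
  have "pt_set V E C \<le> enat (card V - 1)" using pt_set_le_card[OF fin \<open>zf_set V E C\<close>] .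
  then obtain p where p: "pt_set V E C = enat p" "p \<le> card V - 1"
    by (cases "pt_set V E C") auto
  then have "(zf_step V E ^^ p) C = V" using pt_set_eq_enat_iff[OF \<open>zf_set V E C\<close>] by blast
  then obtain s' x' y' where
    "IM_feasible V E (card V - 1) s' x' y' p" "(\<Sum>v\<in>V. s' v) = card C"
    using IM_feasible_of_filled[OF G] \<open>zf_set V E C\<close> p(2) by (meson zf_set_def)
  moreover have "(\<Sum>v\<in>V. s v) = card {v \<in> V. s v = 1}"
    using opt fin by (intro sum_le_one_eq_card) (simp_all add: IM_optimal_def IM_feasible_def)
  ultimately show ?thesis
    using IM_optimal_lex_minimal[OF opt] p(1) by fastforce
qed

theorem corollary3p4:
  fixes V :: "'a set" and E :: "'a \<Rightarrow> 'a \<Rightarrow> bool"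
    and s x :: "'a \<Rightarrow> nat" and y :: "'a \<times> 'a \<Rightarrow> nat" and z :: nat
  assumes "simple_graph V E"
    and "IM_optimal V E (card V - 1) s x y z"
  shows "min_zf_set V E {v \<in> V. s v = 1}
         \<and> pt V E = pt_set V E {v \<in> V. s v = 1}
         \<and> pt_set V E {v \<in> V. s v = 1} = enat z"
proof -
  let ?C = "{v \<in> V. s v = 1}"
  have fin: "finite V" and edges: "\<forall>u v. E u v \<longrightarrow> u \<in> V \<and> v \<in> V"
    using assms(1) by (simp_all add: simple_graph_def)
  have "IM_feasible V E (card V - 1) s x y z" using assms(2) by (simp add: IM_optimal_def)
  then have "(zf_step V E ^^ z) ?C = V" by (rule IM_feasible_filled_at_z[OF edges])
  then have zf: "zf_set V E ?C" and pt_le: "pt_set V E ?C \<le> enat z"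
    by (auto simp: zf_set_def intro: pt_set_le)
  note lex = IM_optimal_le_zf_set[OF assms]
  have min: "min_zf_set V E ?C"
    using fin zf lex by (blast intro: min_zf_setI)
  have pt_C: "pt_set V E ?C = enat z"
    using pt_le lex[OF zf] by (simp add: antisym)
  have "pt V E = pt_set V E ?C"
    using min lex pt_C by (intro pt_eqI) (auto simp: min_zf_set_def)
  with min pt_C show ?thesis by simp
qed

end
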